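(* Let $\mathcal M=(S,A,P)$ be an MDP, $T\subseteq S$ a set of sink target states, $\mathcal M'$ the pruned MDP and $s_0\in S'$. For every strategy $\sigma\in\Sigma^{\mathrm{Opt}}_{\mathcal M}$, $$\Pr'_{\sigma,s_0}(\Diamond T)=\frac{\Pr_{\sigma,s_0}(\Diamond T)}{\mathrm{Val}(s_0)}.$$
   Context: An MDP is $\mathcal M=(S,A,P)$ with $S,A$ finite and $P$ a partial map $S\times A\to\mathrm{Dist}(S)$; $a$ is legal at $s$ if $P(s,a)$ is defined; $P(s,a,s')=P(s,a)(s')$. A strategy maps finite paths $s_0a_0\dots s_n$ (with $a_i$ legal at $s_i$, $P(s_i,a_i,s_{i+1})>0$) to distributions over legal actions at the last state. $\Pr_{\sigma,s}$ is the induced probability measure on infinite paths from $s$. States of $T$ are sinks; $\Diamond T$ is the event of visiting $T$; $\mathrm{Val}(s)=\max_\sigma\Pr_{\sigma,s}(\Diamond T)$. $\mathrm{Opt}_{\mathcal M}=\{(s,a): a\text{ legal at }s,\ \mathrm{Val}(s)=\sum_{s'}P(s,a,s')\mathrm{Val}(s')\}$; $\Sigma^{\mathrm{Opt}}_{\mathcal M}$ is the set of strategies that, after every finite path $\rho$, only give positive probability to actions $a$ with $(\mathrm{last}(\rho),a)\in\mathrm{Opt}_{\mathcal M}$. The pruned MDP $\mathcal M'=(S',A,P')$ has $S'=\{s:\mathrm{Val}(s)>0\}$ and $P'(s,a,s')=P(s,a,s')\mathrm{Val}(s')/\mathrm{Val}(s)$ if $s\in S'$ and $(s,a)\in\mathrm{Opt}_{\mathcal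 M}$ (undefined otherwise). Strategies in $\Sigma^{\mathrm{Opt}}_{\mathcal M}$ are identified with strategies of $\mathcal M'$ by restriction to finite paths of $\mathcal M'$; $\Pr'_{\sigma,s}$ is the induced measure in $\mathcal M'$. *)

theory Defs
  imports "HOL-Probability.Probability"
begin

text \<open>An MDP with finite state type 's and finite action type 'a is a partial map
  P :: 's => 'a => ('s => real) option; P s a = Some d means action a is legal at s
  and d is its successor distribution (d s' = P(s,a,s')).\<close>

type_synonym ('s, 'a) mdp = "'s \<Rightarrow> 'a \<Rightarrow> ('s \<Rightarrow> real) option"

definition legal :: "('s, 'a) mdp \<Rightarrow> 's \<Rightarrow> 'a set" where
  "legal P s = {a. P s a \<noteq> None}"

definition tprob :: "('s, 'a) mdp \<Rightarrow> 's \<Rightarrow> 'a \<Rightarrow> 's \<Rightarrow> real" where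
  "tprob P s a s' = (case P s a of None \<Rightarrow> 0 | Some d \<Rightarrow> d s')"

definition is_mdp :: "('s::finite, 'a::finite) mdp \<Rightarrow> bool" where
  "is_mdp P \<longleftrightarrow> (\<forall>s a d. P s a = Some d \<longrightarrow> (\<forall>s'. d s' \<ge> 0) \<and> (\<Sum>s'\<in>UNIV. d s') = 1)
                 \<and> (\<forall>s. legal P s \<noteq> {})"

definition sinks :: "('s, 'a) mdp \<Rightarrow> 's set \<Rightarrow> bool" where
  "sinks P T \<longleftrightarrow> (\<forall>t\<in>T. \<forall>a\<in>legal P t. tprob P t a t = 1)"

text \<open>A finite path s_0 a_0 ... s_{n-1} a_{n-1} s_n is represented by its history
  [(s_0,a_0),...,(s_{n-1},a_{n-1})] and its last state s_n.\<close>
fun valid_path :: "('s, 'a) mdp \<Rightarrow> ('s \<times> 'a) list \<Rightarrow> 's \<Rightarrow> bool" where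
  "valid_path P [] s = True"
| "valid_path P ((t, a) # h) s =
     (a \<in> legal P t \<and> tprob P t a (case h of [] \<Rightarrow> s | (u, _) # _ \<Rightarrow> u) > 0 \<and> valid_path P h s)"

type_synonym ('s, 'a) strat = "('s \<times> 'a) list \<Rightarrow> 's \<Rightarrow> 'a pmf"

definition is_strategy :: "('s, 'a) mdp \<Rightarrow> ('s, 'a) strat \<Rightarrow> bool" where
  "is_strategy P \<sigma> \<longleftrightarrow> (\<forall>h s. valid_path P h s \<longrightarrow> set_pmf (\<sigma> h s) \<subseteq> legal P s)"

fun path_prob :: "('s, 'a) mdp \<Rightarrow> ('s, 'a) strat \<Rightarrow> ('s \<times> 'a) list \<Rightarrow> 's \<Rightarrow> ('a \<times> 's) list \<Rightarrow> real" where
  "path_prob P \<sigma> hist s [] = 1"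
| "path_prob P \<sigma> hist s ((a, s') # rest) =
     pmf (\<sigma> hist s) a * tprob P s a s' * path_prob P \<sigma> (hist @ [(s, a)]) s' rest"

definition first_hit :: "'s set \<Rightarrow> 's \<Rightarrow> ('a \<times> 's) list \<Rightarrow> bool" where
  "first_hit T s xs \<longleftrightarrow> (let sts = s # map snd xs in
      last sts \<in> T \<and> (\<forall>t\<in>set (butlast sts). t \<notin> T))"

text \<open>Pr_{sigma,s}(<> T): the measure of the event <>T on infinite paths is the
  (countable, disjoint) sum over the cylinders of first-hitting finite paths,
  i.e. the limit of the probabilities of reaching T within n steps.\<close>
definition reach_prob :: "('s::finite, 'a::finite) mdp \<Rightarrow> ('s, 'a) strat \<Rightarrow> 's set \<Rightarrow> 's \<Rightarrow> real" where
  "reach_prob P \<sigma> T s =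
     (SUP n. \<Sum>k\<le>n. \<Sum>xs\<in>{xs. length xs = k \<and> first_hit T s xs}. path_prob P \<sigma> [] s xs)"

definition Val :: "('s::finite, 'a::finite) mdp \<Rightarrow> 's set \<Rightarrow> 's \<Rightarrow> real" where
  "Val P T s = (SUP \<sigma>\<in>{\<sigma>. is_strategy P \<sigma>}. reach_prob P \<sigma> T s)"

definition Opt :: "('s::finite, 'a::finite) mdp \<Rightarrow> 's set \<Rightarrow> ('s \<times> 'a) set" where
  "Opt P T = {(s, a). a \<in> legal P s \<and> Val P T s = (\<Sum>s'\<in>UNIV. tprob P s a s' * Val P T s')}"

definition opt_strategies :: "('s::finite, 'a::finite) mdp \<Rightarrow> 's set \<Rightarrow> ('s, 'a) strat set" where
  "opt_strategies P T = {\<sigma>. is_strategy P \<sigma> \<and>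
      (\<forall>h s. valid_path P h s \<longrightarrow> set_pmf (\<sigma> h s) \<subseteq> {a. (s, a) \<in> Opt P T})}"

definition pos_states :: "('s::finite, 'a::finite) mdp \<Rightarrow> 's set \<Rightarrow> 's set" where
  "pos_states P T = {s. Val P T s > 0}"

text \<open>The pruned MDP M' (on the same state type; states outside S' have no legal
  actions and are never reached from S' with positive probability).\<close>
definition pruned :: "('s::finite, 'a::finite) mdp \<Rightarrow> 's set \<Rightarrow> ('s, 'a) mdp" where
  "pruned P T s a = (if s \<in> pos_states P T \<and> (s, a) \<in> Opt P T
      then Some (\<lambda>s'. tprob P s a s' * Val P T s' / Val P T s) else None)"

end

theory Submission
  imports Defs
begin

text \<open>For an action a that is optimal at s, the pruned transition probabilities satisfy
  P'(s,a,s') Val(s) = P(s,a,s') Val(s'); when Val(s) = 0 both sides vanish, because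
  optimality of a forces Val(s') = 0 at every successor. Multiplying along a path that
  follows a strategy in opt_strategies, the product telescopes: the pruned probability
  of the path times Val(s_0) equals its original probability times the value of its last
  state. A path that first hits T ends in a state of value 1, so every term of the
  series defining Pr'(<>T) is the corresponding term for Pr(<>T) divided by Val(s_0).\<close>

lemma tprob_nonneg: "is_mdp P \<Longrightarrow> tprob P s a s' \<ge> 0"
  unfolding tprob_def is_mdp_def by (auto split: option.split)

lemma sum_tprob_le_1: "is_mdp P \<Longrightarrow> (\<Sum>s'\<in>UNIV. tprob P s a s') \<le> 1"
  unfolding tprob_def is_mdp_def by (cases "P s a") auto

lemma path_prob_nonneg: "is_mdp P \<Longrightarrow> path_prob P \<sigma> h s xs \<ge> 0"
  by (induction xs arbitrary: h s) (auto simp: tprob_nonneg)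

lemma valid_path_snoc:
  "valid_path P h s \<Longrightarrow> a \<in> legal P s \<Longrightarrow> tprob P s a s' > 0 \<Longrightarrow> valid_path P (h @ [(s, a)]) s'"
proof (induction h arbitrary: s)
  case Nil
  then show ?case by simp
next
  case (Cons x h)
  then show ?case by (cases x; cases h) auto
qed

lemma first_hit_Nil: "first_hit T s [] \<longleftrightarrow> s \<in> T"
  by (simp add: first_hit_def)

lemma first_hit_Cons: "first_hit T s ((a, s') # xs) \<longleftrightarrow> s \<notin> T \<and> first_hit T s' xs"
  by (auto simp: first_hit_def Let_def)

lemma finite_lists_length:
  "finite {xs :: 'b::finite list. length xs = k \<and> Q xs}"
  using finite_lists_length_eq[of "UNIV :: 'b set" k] by (rule finite_subset[rotated]) auto

lemma sum_lists_length_Suc: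
  fixes f :: "'b::finite list \<Rightarrow> 'c::comm_monoid_add"
  shows "(\<Sum>xs | length xs = Suc k \<and> Q xs. f xs)
       = (\<Sum>x\<in>UNIV. \<Sum>xs | length xs = k \<and> Q (x # xs). f (x # xs))"
proof -
  let ?I = "SIGMA x:UNIV. {xs. length xs = k \<and> Q (x # xs)}"
  have "{xs. length xs = Suc k \<and> Q xs} = (\<lambda>(x, xs). x # xs) ` ?I"
    by (auto simp: length_Suc_conv image_iff)
  moreover have "inj_on (\<lambda>(x, xs). x # xs) ?I"
    by (auto simp: inj_on_def)
  ultimately have "(\<Sum>xs | length xs = Suc k \<and> Q xs. f xs) = (\<Sum>(x, xs)\<in>?I. f (x # xs))"
    by (simp add: sum.reindex case_prod_unfold)
  also have "\<dots> = (\<Sum>x\<in>UNIV. \<Sum>xs | length xs = k \<and> Q (x # xs). f (x # xs))"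
    by (rule sum.Sigma[symmetric]) (auto simp: finite_lists_length)
  finally show ?thesis .
qed

definition hit_prob :: "('s, 'a) mdp \<Rightarrow> ('s, 'a) strat \<Rightarrow> 's set \<Rightarrow> nat \<Rightarrow> ('s \<times> 'a) list \<Rightarrow> 's \<Rightarrow> real"
  where "hit_prob P \<sigma> T k h s = (\<Sum>xs | length xs = k \<and> first_hit T s xs. path_prob P \<sigma> h s xs)"

lemma reach_prob_eq_SUP_hit_prob: "reach_prob P \<sigma> T s = (SUP n. \<Sum>k\<le>n. hit_prob P \<sigma> T k [] s)"
  unfolding reach_prob_def hit_prob_def ..

lemma hit_prob_0: "hit_prob P \<sigma> T 0 h s = (if s \<in> T then 1 else 0)"
proof -
  have paths: "{xs. length xs = 0 \<and> first_hit T s xs} = (if s \<in> T then {[]} else {})"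
    by (auto simp: first_hit_Nil)
  show ?thesis
    unfolding hit_prob_def paths by simp
qed

lemma hit_prob_Suc:
  fixes P :: "('s::finite, 'a::finite) mdp"
  shows "hit_prob P \<sigma> T (Suc k) h s = (if s \<in> T then 0 else
    (\<Sum>a\<in>UNIV. \<Sum>s'\<in>UNIV. pmf (\<sigma> h s) a * tprob P s a s' * hit_prob P \<sigma> T k (h @ [(s, a)]) s'))"
proof -
  have "hit_prob P \<sigma> T (Suc k) h s = (\<Sum>(a, s')\<in>UNIV. if s \<in> T then 0 else
      pmf (\<sigma> h s) a * tprob P s a s' * hit_prob P \<sigma> T k (h @ [(s, a)]) s')"
    unfolding hit_prob_def sum_lists_length_Suc
  proof (intro sum.cong refl)
    fix x :: "'a \<times> 's"
    show "(\<Sum>xs | length xs = k \<and> first_hit T s (x # xs). path_prob P \<sigma> h s (x # xs))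
        = (case x of (a, s') \<Rightarrow> if s \<in> T then 0 else pmf (\<sigma> h s) a * tprob P s a s' *
            (\<Sum>xs | length xs = k \<and> first_hit T s' xs. path_prob P \<sigma> (h @ [(s, a)]) s' xs))"
      by (cases x) (simp add: first_hit_Cons sum_distrib_left)
  qed
  then show ?thesis
    by (simp add: UNIV_Times_UNIV[symmetric] sum.cartesian_product del: UNIV_Times_UNIV)
qed

lemma hit_prob_nonneg: "is_mdp P \<Longrightarrow> hit_prob P \<sigma> T k h s \<ge> 0"
  unfolding hit_prob_def by (simp add: sum_nonneg path_prob_nonneg)

lemma sum_hit_prob_le_1:
  fixes P :: "('s::finite, 'a::finite) mdp"
  assumes mdp: "is_mdp P"
  shows "(\<Sum>k\<le>n. hit_prob P \<sigma> T k h s) \<le> 1"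
proof (induction n arbitrary: h s)
  case 0
  then show ?case by (simp add: hit_prob_0)
next
  case (Suc n)
  show ?case
  proof (cases "s \<in> T")
    case True
    then show ?thesis
      by (simp add: sum.atMost_Suc_shift hit_prob_0 hit_prob_Suc del: sum.atMost_Suc)
  next
    case False
    have "(\<Sum>k\<le>Suc n. hit_prob P \<sigma> T k h s)
        = (\<Sum>a\<in>UNIV. \<Sum>s'\<in>UNIV. pmf (\<sigma> h s) a * tprob P s a s' *
             (\<Sum>k\<le>n. hit_prob P \<sigma> T k (h @ [(s, a)]) s'))"
      using False
      by (simp add: sum.atMost_Suc_shift hit_prob_0 hit_prob_Suc sum_distrib_left
          sum.swap[of _ "{..n}"] del: sum.atMost_Suc)
    also have "\<dots> \<le> (\<Sum>a\<in>UNIV. \<Sum>s'\<in>UNIV. pmf (\<sigma> h s) a * tprob P s a s')"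
      by (intro sum_mono mult_left_le) (auto simp: Suc.IH tprob_nonneg[OF mdp])
    also have "\<dots> = (\<Sum>a\<in>UNIV. pmf (\<sigma> h s) a * (\<Sum>s'\<in>UNIV. tprob P s a s'))"
      by (simp add: sum_distrib_left)
    also have "\<dots> \<le> (\<Sum>a\<in>UNIV. pmf (\<sigma> h s) a)"
      by (intro sum_mono mult_right_le_one_le) (auto simp: sum_tprob_le_1[OF mdp] tprob_nonneg[OF mdp] sum_nonneg)
    also have "\<dots> = 1"
      by (rule sum_pmf_eq_1) auto
    finally show ?thesis .
  qed
qed

lemma bdd_above_sum_hit_prob: "is_mdp P \<Longrightarrow> bdd_above (range (\<lambda>n. \<Sum>k\<le>n. hit_prob P \<sigma> T k [] s))"
  by (rule bdd_aboveI[of _ 1]) (auto intro: sum_hit_prob_le_1)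

lemma reach_prob_nonneg: "is_mdp P \<Longrightarrow> reach_prob P \<sigma> T s \<ge> 0"
  unfolding reach_prob_eq_SUP_hit_prob
  by (rule cSUP_upper2[where x = 0]) (auto simp: bdd_above_sum_hit_prob hit_prob_nonneg)

lemma reach_prob_le_1: "is_mdp P \<Longrightarrow> reach_prob P \<sigma> T s \<le> 1"
  unfolding reach_prob_eq_SUP_hit_prob by (rule cSUP_least) (auto intro: sum_hit_prob_le_1)

lemma reach_prob_target: "t \<in> T \<Longrightarrow> reach_prob P \<sigma> T t = 1"
proof -
  assume "t \<in> T"
  then have "(\<Sum>k\<le>n. hit_prob P \<sigma> T k [] t) = 1" for n
    by (induction n) (auto simp: hit_prob_0 hit_prob_Suc)
  then show ?thesis
    unfolding reach_prob_eq_SUP_hit_prob by simp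
qed

text \<open>Val is a supremum over the strategies of P, so a strategy is needed to rule out
  the junk value of a supremum over the empty set.\<close>

lemma Val_nonneg:
  assumes "is_mdp P" "is_strategy P \<sigma>"
  shows "Val P T s \<ge> 0"
proof -
  have "bdd_above ((\<lambda>\<sigma>. reach_prob P \<sigma> T s) ` {\<sigma>. is_strategy P \<sigma>})"
    by (rule bdd_aboveI[of _ 1]) (auto simp: reach_prob_le_1 assms(1))
  then show ?thesis
    unfolding Val_def using assms by (intro cSUP_upper2[of _ _ \<sigma>]) (auto simp: reach_prob_nonneg)
qed

lemma Val_target: "is_strategy P \<sigma> \<Longrightarrow> t \<in> T \<Longrightarrow> Val P T t = 1"
  unfolding Val_def by (subst reach_prob_target) (auto intro!: cSUP_const)

lemma tprob_pruned:
  "tprob (pruned P T) s a s' =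
    (if s \<in> pos_states P T \<and> (s, a) \<in> Opt P T then tprob P s a s' * Val P T s' / Val P T s else 0)"
  unfolding tprob_def pruned_def by simp

lemma tprob_pruned_mult_Val:
  assumes mdp: "is_mdp P" and nonneg: "\<And>s. Val P T s \<ge> 0" and opt: "(s, a) \<in> Opt P T"
  shows "tprob (pruned P T) s a s' * Val P T s = tprob P s a s' * Val P T s'"
proof (cases "Val P T s > 0")
  case True
  then show ?thesis
    using opt by (simp add: tprob_pruned pos_states_def)
next
  case False
  then have "Val P T s = 0"
    using nonneg[of s] by simp
  then have "(\<Sum>s''\<in>UNIV. tprob P s a s'' * Val P T s'') = 0"
    using opt by (simp add: Opt_def)
  then have "tprob P s a s' * Val P T s' = 0"
    by (subst (asm) sum_nonneg_eq_0_iff) (auto simp: tprob_nonneg[OF mdp] nonneg)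
  with \<open>Val P T s = 0\<close> show ?thesis
    by simp
qed

lemma path_prob_pruned_mult_Val:
  assumes mdp: "is_mdp P" and opt: "\<sigma> \<in> opt_strategies P T" and nonneg: "\<And>s. Val P T s \<ge> 0"
    and "valid_path P h s"
  shows "path_prob (pruned P T) \<sigma> h s xs * Val P T s
       = path_prob P \<sigma> h s xs * Val P T (last (s # map snd xs))"
  using \<open>valid_path P h s\<close>
proof (induction xs arbitrary: h s)
  case Nil
  then show ?case by simp
next
  case (Cons x xs)
  obtain a s' where x: "x = (a, s')"
    by fastforce
  show ?case
  proof (cases "a \<in> set_pmf (\<sigma> h s)")
    case False
    then show ?thesis
      by (simp add: x set_pmf_iff)
  next
    case True
    with opt Cons.prems have opt_a: "(s, a) \<in> Opt P T" and legal_a: "a \<in> legal P s"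
      unfolding opt_strategies_def is_strategy_def by blast+
    let ?q' = "path_prob (pruned P T) \<sigma> (h @ [(s, a)]) s' xs"
    let ?q = "path_prob P \<sigma> (h @ [(s, a)]) s' xs"
    have "path_prob (pruned P T) \<sigma> h s (x # xs) * Val P T s
        = pmf (\<sigma> h s) a * (tprob (pruned P T) s a s' * Val P T s) * ?q'"
      by (simp add: x ac_simps)
    also have "\<dots> = pmf (\<sigma> h s) a * tprob P s a s' * (?q' * Val P T s')"
      unfolding tprob_pruned_mult_Val[OF mdp nonneg opt_a] by (simp add: ac_simps)
    also have "\<dots> = pmf (\<sigma> h s) a * tprob P s a s' * (?q * Val P T (last (s' # map snd xs)))"
    proof (cases "tprob P s a s' > 0")
      case True
      then show ?thesis
        by (simp add: Cons.IH[OF valid_path_snoc[OF Cons.prems legal_a True]])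
    next
      case False
      then show ?thesis
        using tprob_nonneg[OF mdp, of s a s'] by simp
    qed
    also have "\<dots> = path_prob P \<sigma> h s (x # xs) * Val P T (last (s # map snd (x # xs)))"
      by (simp add: x)
    finally show ?thesis .
  qed
qed

lemma SUP_divide_const:
  fixes f :: "'i \<Rightarrow> real"
  assumes "c > 0" and "bdd_above (range f)"
  shows "(SUP n. f n / c) = (SUP n. f n) / c"
proof -
  have "mono (\<lambda>x::real. x / c)"
    using \<open>c > 0\<close> by (simp add: mono_def divide_right_mono)
  moreover have "continuous (at_left (SUP n. f n)) (\<lambda>x. x / c)"
    using \<open>c > 0\<close> by (intro continuous_intros) simp
  ultimately show ?thesis
    using continuous_at_Sup_mono[of "\<lambda>x. x / c" "range f"] assms(2) by (simp add: image_image)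
qed

theorem lemma4:
  fixes P :: "('s::finite, 'a::finite) mdp" and T :: "'s set"
    and s0 :: 's and \<sigma> :: "('s, 'a) strat"
  assumes "is_mdp P" and "sinks P T"
    and "s0 \<in> pos_states P T"
    and "\<sigma> \<in> opt_strategies P T"
  shows "reach_prob (pruned P T) \<sigma> T s0 = reach_prob P \<sigma> T s0 / Val P T s0"
proof -
  have strat: "is_strategy P \<sigma>"
    using assms(4) by (simp add: opt_strategies_def)
  have Val_s0: "Val P T s0 > 0"
    using assms(3) by (simp add: pos_states_def)
  have "path_prob (pruned P T) \<sigma> [] s0 xs = path_prob P \<sigma> [] s0 xs / Val P T s0"
    if "first_hit T s0 xs" for xs
  proof -
    have "Val P T (last (s0 # map snd xs)) = 1"
      using that by (intro Val_target[OF strat]) (simp add: first_hit_def Let_def)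
    with path_prob_pruned_mult_Val[OF assms(1,4) Val_nonneg[OF assms(1) strat], of "[]" s0 xs]
    show ?thesis
      using Val_s0 by (simp add: field_simps)
  qed
  then have "(\<Sum>k\<le>n. hit_prob (pruned P T) \<sigma> T k [] s0)
      = (\<Sum>k\<le>n. hit_prob P \<sigma> T k [] s0) / Val P T s0" for n
    unfolding hit_prob_def sum_divide_distrib by (intro sum.cong) auto
  then show ?thesis
    unfolding reach_prob_eq_SUP_hit_prob
    by (simp add: SUP_divide_const[OF Val_s0 bdd_above_sum_hit_prob[OF assms(1)]])
qed

end
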